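(* Let $\mathbf A$ be a semisimple Pavelka algebra and $O\colon A\to A$ a closure operator. The following are equivalent: (i) $\mathbf r\cdot O(x)\le O(\mathbf r\cdot x)$ for all $x\in A$ and all constants $\mathbf r$; (ii) there exist a set $G$ and a fuzzy relation $I\colon\mathrm{Spec_M}\mathbf A\times G\to[0,1]$ (a fuzzy formal context $(\mathrm{Spec_M}\mathbf A,G,I)$) such that $n_{\mathbf A}(O(x))=h_I(d_I(n_{\mathbf A}(x)))$ for all $x\in A$.
   Context: An MV-algebra $(A;\oplus,\neg,0)$ carries derived operations $1=\neg0$, $x\cdot y=\neg(\neg x\oplus\neg y)$, $x\rightarrow y=\neg x\oplus y$, order $x\le y$ iff $\neg x\oplus y=1$. The standard MV-algebra is $[0,1]$ with $x\oplus y=\min\{x+y,1\}$, $\neg x=1-x$ (so $x\cdot y=\max\{0,x+y-1\}$, $x\rightarrow y=\min\{1,1-x+y\}$). A Pavelka algebra is $\mathbf A=(A;\oplus,\neg,\{\mathbf r\mid r\in[0,1]\cap\mathbb Q\})$ with $(A;\oplus,\neg,\mathbf 0)$ an MV-algebra, $\mathbf r\oplus\mathbf s=\mathbf t$ whenever $\min\{r+s,1\}=t$, $\neg\mathbf r=\mathbf s$ whenever $1-r=s$. Filters are filters of the MV-reduct; $\mathrm{Spec_M}\mathbf A$ is the set of maximal proper filters; for $F\in\mathrm{Spec_M}\mathbf A$, $\mathbf A/F$ embeds uniquely into $[0,1]$ and $x/F$ is identified with its image in $[0,1]$. Semisimple: MV-reduct is a subdirect product of simple MV-algebras. Natural embedding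 $n_{\mathbf A}\colon A\to[0,1]^{\mathrm{Spec_M}\mathbf A}$, $n_{\mathbf A}(x)(F)=x/F$. A closure operator is a monotone $O$ with $x\le O(x)$, $O(O(x))=O(x)$. For $I\colon M\times G\to[0,1]$ (with $M=\mathrm{Spec_M}\mathbf A$): $d_I\colon[0,1]^M\to[0,1]^G$, $d_I(x)(g)=\bigwedge_{m\in M}(x(m)\rightarrow I(m,g))$; $h_I\colon[0,1]^G\to[0,1]^M$, $h_I(y)(m)=\bigwedge_{g\in G}(y(g)\rightarrow I(m,g))$. *)

theory Defs
  imports Complex_Main
begin

text \<open>An algebra is given on the carrier UNIV of a type 'a by operations
  oplus, neg and rational constants c (only c r for r in [0,1] are meaningful).
  The MV-zero is the constant c 0.\<close>

definition mv_algebra :: "('a \<Rightarrow> 'a \<Rightarrow> 'a) \<Rightarrow> ('a \<Rightarrow> 'a) \<Rightarrow> 'a \<Rightarrow> bool" where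
  "mv_algebra oplus neg zero \<longleftrightarrow>
     (\<forall>x y z. oplus x (oplus y z) = oplus (oplus x y) z) \<and>
     (\<forall>x y. oplus x y = oplus y x) \<and>
     (\<forall>x. oplus x zero = x) \<and>
     (\<forall>x. neg (neg x) = x) \<and>
     (\<forall>x. oplus x (neg zero) = neg zero) \<and>
     (\<forall>x y. oplus (neg (oplus (neg x) y)) y = oplus (neg (oplus (neg y) x)) x)"

definition rat01 :: "rat set" where
  "rat01 = {r. 0 \<le> r \<and> r \<le> 1}"

definition pavelka_algebra :: "('a \<Rightarrow> 'a \<Rightarrow> 'a) \<Rightarrow> ('a \<Rightarrow> 'a) \<Rightarrow> (rat \<Rightarrow> 'a) \<Rightarrow> bool" where
  "pavelka_algebra oplus neg c \<longleftrightarrow>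
     mv_algebra oplus neg (c 0) \<and>
     (\<forall>r\<in>rat01. \<forall>s\<in>rat01. oplus (c r) (c s) = c (min (r + s) 1)) \<and>
     (\<forall>r\<in>rat01. neg (c r) = c (1 - r))"

definition mv_one :: "('a \<Rightarrow> 'a) \<Rightarrow> 'a \<Rightarrow> 'a" where
  "mv_one neg zero = neg zero"

definition mv_mult :: "('a \<Rightarrow> 'a \<Rightarrow> 'a) \<Rightarrow> ('a \<Rightarrow> 'a) \<Rightarrow> 'a \<Rightarrow> 'a \<Rightarrow> 'a" where
  "mv_mult oplus neg x y = neg (oplus (neg x) (neg y))"

definition mv_le :: "('a \<Rightarrow> 'a \<Rightarrow> 'a) \<Rightarrow> ('a \<Rightarrow> 'a) \<Rightarrow> 'a \<Rightarrow> 'a \<Rightarrow> 'a \<Rightarrow> bool" where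
  "mv_le oplus neg zero x y \<longleftrightarrow> oplus (neg x) y = mv_one neg zero"

definition mv_filter :: "('a \<Rightarrow> 'a \<Rightarrow> 'a) \<Rightarrow> ('a \<Rightarrow> 'a) \<Rightarrow> 'a \<Rightarrow> 'a set \<Rightarrow> bool" where
  "mv_filter oplus neg zero F \<longleftrightarrow>
     mv_one neg zero \<in> F \<and>
     (\<forall>x\<in>F. \<forall>y\<in>F. mv_mult oplus neg x y \<in> F) \<and>
     (\<forall>x\<in>F. \<forall>y. mv_le oplus neg zero x y \<longrightarrow> y \<in> F)"

definition max_filter :: "('a \<Rightarrow> 'a \<Rightarrow> 'a) \<Rightarrow> ('a \<Rightarrow> 'a) \<Rightarrow> 'a \<Rightarrow> 'a set \<Rightarrow> bool" where
  "max_filter oplus neg zero F \<longleftrightarrow>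
     mv_filter oplus neg zero F \<and> F \<noteq> UNIV \<and>
     (\<forall>H. mv_filter oplus neg zero H \<and> H \<noteq> UNIV \<and> F \<subseteq> H \<longrightarrow> H = F)"

definition SpecM :: "('a \<Rightarrow> 'a \<Rightarrow> 'a) \<Rightarrow> ('a \<Rightarrow> 'a) \<Rightarrow> 'a \<Rightarrow> 'a set set" where
  "SpecM oplus neg zero = {F. max_filter oplus neg zero F}"

definition mv_hom01 :: "('a \<Rightarrow> 'a \<Rightarrow> 'a) \<Rightarrow> ('a \<Rightarrow> 'a) \<Rightarrow> 'a \<Rightarrow> ('a \<Rightarrow> real) \<Rightarrow> bool" where
  "mv_hom01 oplus neg zero h \<longleftrightarrow>
     (\<forall>x. 0 \<le> h x \<and> h x \<le> 1) \<and>
     (\<forall>x y. h (oplus x y) = min (h x + h y) 1) \<and>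
     (\<forall>x. h (neg x) = 1 - h x) \<and>
     h zero = 0"

text \<open>For a maximal filter F, the quotient A/F embeds uniquely into [0,1];
  embeddings of A/F correspond to homomorphisms A \<rightarrow> [0,1] whose filter
  kernel h^{-1}(1) is F. x/F is the image of the class of x.\<close>
definition quot_val :: "('a \<Rightarrow> 'a \<Rightarrow> 'a) \<Rightarrow> ('a \<Rightarrow> 'a) \<Rightarrow> 'a \<Rightarrow> 'a set \<Rightarrow> 'a \<Rightarrow> real" where
  "quot_val oplus neg zero F x =
     (THE h. mv_hom01 oplus neg zero h \<and> {y. h y = 1} = F) x"

definition nat_emb :: "('a \<Rightarrow> 'a \<Rightarrow> 'a) \<Rightarrow> ('a \<Rightarrow> 'a) \<Rightarrow> 'a \<Rightarrow> 'a \<Rightarrow> 'a set \<Rightarrow> real" where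
  "nat_emb oplus neg zero x = (\<lambda>F. quot_val oplus neg zero F x)"

definition semisimple :: "('a \<Rightarrow> 'a \<Rightarrow> 'a) \<Rightarrow> ('a \<Rightarrow> 'a) \<Rightarrow> 'a \<Rightarrow> bool" where
  "semisimple oplus neg zero \<longleftrightarrow> \<Inter> (SpecM oplus neg zero) = {mv_one neg zero}"

definition closure_op :: "('a \<Rightarrow> 'a \<Rightarrow> 'a) \<Rightarrow> ('a \<Rightarrow> 'a) \<Rightarrow> 'a \<Rightarrow> ('a \<Rightarrow> 'a) \<Rightarrow> bool" where
  "closure_op oplus neg zero Cl \<longleftrightarrow>
     (\<forall>x y. mv_le oplus neg zero x y \<longrightarrow> mv_le oplus neg zero (Cl x) (Cl y)) \<and>
     (\<forall>x. mv_le oplus neg zero x (Cl x)) \<and>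
     (\<forall>x. Cl (Cl x) = Cl x)"

text \<open>Lukasiewicz implication on [0,1] and infimum in [0,1]
  (the empty infimum being 1).\<close>
definition luk_imp :: "real \<Rightarrow> real \<Rightarrow> real" where
  "luk_imp a b = min 1 (1 - a + b)"

definition inf01 :: "real set \<Rightarrow> real" where
  "inf01 S = Inf (insert 1 S)"

definition dI :: "'m set \<Rightarrow> ('m \<Rightarrow> 'g \<Rightarrow> real) \<Rightarrow> ('m \<Rightarrow> real) \<Rightarrow> 'g \<Rightarrow> real" where
  "dI M I x = (\<lambda>g. inf01 ((\<lambda>m. luk_imp (x m) (I m g)) ` M))"

definition hI :: "'g set \<Rightarrow> ('m \<Rightarrow> 'g \<Rightarrow> real) \<Rightarrow> ('g \<Rightarrow> real) \<Rightarrow> 'm \<Rightarrow> real" where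
  "hI G I y = (\<lambda>m. inf01 ((\<lambda>g. luk_imp (y g) (I m g)) ` G))"

text \<open>Condition (ii): (SpecM, G, I) is a fuzzy formal context whose concept-forming
  closure represents Cl via the natural embedding.\<close>
definition represented_by_context ::
  "('a \<Rightarrow> 'a \<Rightarrow> 'a) \<Rightarrow> ('a \<Rightarrow> 'a) \<Rightarrow> 'a \<Rightarrow> ('a \<Rightarrow> 'a) \<Rightarrow> 'g set \<Rightarrow> ('a set \<Rightarrow> 'g \<Rightarrow> real) \<Rightarrow> bool" where
  "represented_by_context oplus neg zero Cl G I \<longleftrightarrow>
     (let M = SpecM oplus neg zero in
       (\<forall>m\<in>M. \<forall>g\<in>G. 0 \<le> I m g \<and> I m g \<le> 1) \<and>
       (\<forall>x. \<forall>m\<in>M. nat_emb oplus neg zero (Cl x) m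
              = hI G I (dI M I (nat_emb oplus neg zero x)) m))"

end

theory Submission
  imports Defs
begin

(* After the basic
   arithmetic of MV-algebras (residuation, prelinearity), a maximal filter F is
   shown to be Archimedean and prime, so "x \<le> y modulo F" is a total preorder.
   In a Pavelka algebra the value val x = sup {r | c r \<le> x modulo F} is then a
   homomorphism A \<rightarrow> [0,1] with kernel F, and it is the only one; hence
   x/F = val x.  Semisimplicity makes n_A an order embedding.

   The fuzzy part works for an arbitrary context: d_I and h_I form a fuzzy Galois
   connection, which yields r \<otimes> h_I(d_I X) \<le> h_I(d_I (r \<otimes> X)) and so
   (ii) \<Longrightarrow> (i).  For (i) \<Longrightarrow> (ii) the canonical context G = A, I(m,g) = (O g)/m
   represents O; the proof combines order reflection with density of the
   rational constants. *)

locale mv =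
  fixes oplus :: "'a \<Rightarrow> 'a \<Rightarrow> 'a" (infixl "\<oplus>" 65)
    and neg :: "'a \<Rightarrow> 'a"
    and zero :: 'a
  assumes mv_axioms: "mv_algebra oplus neg zero"
begin

abbreviation one :: 'a where "one \<equiv> neg zero"
abbreviation mult :: "'a \<Rightarrow> 'a \<Rightarrow> 'a" (infixl "\<odot>" 70) where "x \<odot> y \<equiv> mv_mult oplus neg x y"
abbreviation le :: "'a \<Rightarrow> 'a \<Rightarrow> bool" (infix "\<preceq>" 50) where "x \<preceq> y \<equiv> mv_le oplus neg zero x y"

lemma add_assoc: "x \<oplus> (y \<oplus> z) = x \<oplus> y \<oplus> z"
  using mv_axioms unfolding mv_algebra_def by blast
lemma add_commute: "x \<oplus> y = y \<oplus> x"
  using mv_axioms unfolding mv_algebra_def by blast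
lemma add_zero [simp]: "x \<oplus> zero = x"
  using mv_axioms unfolding mv_algebra_def by blast
lemma zero_add [simp]: "zero \<oplus> x = x"
  using add_commute add_zero by metis
lemma neg_neg [simp]: "neg (neg x) = x"
  using mv_axioms unfolding mv_algebra_def by blast
lemma add_one [simp]: "x \<oplus> one = one"
  using mv_axioms unfolding mv_algebra_def by blast
lemma one_add [simp]: "one \<oplus> x = one"
  using add_commute add_one by metis
text \<open>The Lukasiewicz axiom: both sides are the join of x and y.\<close>
lemma luk_axiom: "neg (neg x \<oplus> y) \<oplus> y = neg (neg y \<oplus> x) \<oplus> x"
  using mv_axioms unfolding mv_algebra_def by blast

lemma add_left_commute: "x \<oplus> (y \<oplus> z) = y \<oplus> (x \<oplus> z)"
  by (metis add_assoc add_commute)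
lemmas add_ac = add_assoc[symmetric] add_commute add_left_commute

lemma le_iff: "x \<preceq> y \<longleftrightarrow> neg x \<oplus> y = one"
  by (simp add: mv_le_def mv_one_def)
lemma mult_eq: "x \<odot> y = neg (neg x \<oplus> neg y)"
  by (simp add: mv_mult_def)

lemma add_neg_self [simp]: "x \<oplus> neg x = one"
proof -
  have "neg (neg x \<oplus> one) \<oplus> one = neg (neg one \<oplus> x) \<oplus> x" by (rule luk_axiom)
  thus ?thesis by (simp add: add_commute)
qed
lemma neg_add_self [simp]: "neg x \<oplus> x = one"
  using add_neg_self add_commute by metis

lemma mult_commute: "x \<odot> y = y \<odot> x" by (simp add: mult_eq add_commute)
lemma mult_assoc: "x \<odot> (y \<odot> z) = x \<odot> y \<odot> z" by (simp add: mult_eq add_assoc)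
lemma mult_left_commute: "x \<odot> (y \<odot> z) = y \<odot> (x \<odot> z)" by (metis mult_assoc mult_commute)
lemmas mult_ac = mult_assoc[symmetric] mult_commute mult_left_commute
lemma mult_one [simp]: "x \<odot> one = x" "one \<odot> x = x" by (simp_all add: mult_eq)
lemma neg_add: "neg (x \<oplus> y) = neg x \<odot> neg y" by (simp add: mult_eq)

lemma le_refl [simp]: "x \<preceq> x" by (simp add: le_iff)
lemma zero_le [simp]: "zero \<preceq> x" by (simp add: le_iff)
lemma le_one [simp]: "x \<preceq> one" by (simp add: le_iff)

lemma le_iff_exists_add: "x \<preceq> y \<longleftrightarrow> (\<exists>z. y = x \<oplus> z)"
proof
  assume "x \<preceq> y"
  hence "y = neg (neg y \<oplus> x) \<oplus> x" using luk_axiom[of x y] by (simp add: le_iff)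
  thus "\<exists>z. y = x \<oplus> z" by (metis add_commute)
next
  assume "\<exists>z. y = x \<oplus> z"
  thus "x \<preceq> y" by (auto simp: le_iff add_assoc)
qed

lemma le_antisym: "x \<preceq> y \<Longrightarrow> y \<preceq> x \<Longrightarrow> x = y"
  using luk_axiom[of x y] by (simp add: le_iff)
lemma le_trans [trans]: "x \<preceq> y \<Longrightarrow> y \<preceq> z \<Longrightarrow> x \<preceq> z"
  by (metis le_iff_exists_add add_assoc)
lemma le_add_right: "x \<preceq> x \<oplus> y" using le_iff_exists_add by blast
lemma le_add_left: "x \<preceq> y \<oplus> x" using le_iff_exists_add add_commute by metis
lemma add_right_mono: "x \<preceq> y \<Longrightarrow> x \<oplus> z \<preceq> y \<oplus> z"
  by (metis le_iff_exists_add add_ac)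
lemma neg_antimono: "x \<preceq> y \<Longrightarrow> neg y \<preceq> neg x" by (simp add: le_iff add_commute)

lemma residuation: "x \<odot> y \<preceq> z \<longleftrightarrow> x \<preceq> neg y \<oplus> z" by (simp add: le_iff mult_eq add_assoc)
lemma mult_right_mono: "x \<preceq> y \<Longrightarrow> x \<odot> z \<preceq> y \<odot> z"
  by (metis add_right_mono neg_antimono mult_eq)
lemma mult_mono: "x \<preceq> y \<Longrightarrow> u \<preceq> v \<Longrightarrow> x \<odot> u \<preceq> y \<odot> v"
  by (metis mult_right_mono mult_commute le_trans)
lemma mult_le_left: "x \<odot> y \<preceq> x" by (metis residuation le_add_right add_commute)
lemma le_iff_mult_neg_zero: "x \<preceq> y \<longleftrightarrow> x \<odot> neg y = zero"
  by (simp add: le_iff mult_eq) (metis neg_neg)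
lemma modus_ponens: "x \<odot> (neg x \<oplus> y) \<preceq> y"
proof -
  have "x \<preceq> neg (neg y \<oplus> x) \<oplus> x" by (rule le_add_left)
  thus ?thesis by (simp only: luk_axiom residuation)
qed

definition sup :: "'a \<Rightarrow> 'a \<Rightarrow> 'a" (infixl "\<squnion>" 65) where "x \<squnion> y = (x \<odot> neg y) \<oplus> y"

lemma sup_commute: "x \<squnion> y = y \<squnion> x" using luk_axiom[of x y] by (simp add: sup_def mult_eq add_commute)
lemma sup_ge1: "x \<preceq> x \<squnion> y" by (metis sup_commute sup_def le_add_left)
lemma sup_ge2: "y \<preceq> x \<squnion> y" by (metis sup_def le_add_left)
lemma sup_least: "x \<preceq> t \<Longrightarrow> y \<preceq> t \<Longrightarrow> x \<squnion> y \<preceq> t"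
proof -
  assume "x \<preceq> t" "y \<preceq> t"
  have "x \<squnion> y \<preceq> t \<squnion> y" unfolding sup_def by (rule add_right_mono, rule mult_right_mono, fact)
  also have "t \<squnion> y = (y \<odot> neg t) \<oplus> t" by (metis sup_commute sup_def)
  also have "\<dots> = t" using \<open>y \<preceq> t\<close> le_iff_mult_neg_zero by simp
  finally show ?thesis .
qed
lemma sup_le_add: "x \<squnion> y \<preceq> x \<oplus> y" unfolding sup_def by (rule add_right_mono, rule mult_le_left)

lemma mult_sup_distrib: "x \<odot> (y \<squnion> z) = (x \<odot> y) \<squnion> (x \<odot> z)"
proof (rule le_antisym)
  show "(x \<odot> y) \<squnion> (x \<odot> z) \<preceq> x \<odot> (y \<squnion> z)"
    by (metis sup_least sup_ge1 sup_ge2 mult_right_mono mult_commute)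
  let ?t = "(x \<odot> y) \<squnion> (x \<odot> z)"
  have "y \<preceq> neg x \<oplus> ?t" by (metis residuation mult_commute sup_ge1)
  moreover have "z \<preceq> neg x \<oplus> ?t" by (metis residuation mult_commute sup_ge2)
  ultimately have "y \<squnion> z \<preceq> neg x \<oplus> ?t" by (rule sup_least)
  thus "x \<odot> (y \<squnion> z) \<preceq> ?t" by (metis residuation mult_commute)
qed

text \<open>Elements whose join with b is 1 are closed under \<odot>; this propagates
  prelinearity to powers.\<close>
lemma sup_one_mult: "a \<squnion> b = one \<Longrightarrow> c \<squnion> b = one \<Longrightarrow> (a \<odot> c) \<squnion> b = one"
proof -
  assume h: "a \<squnion> b = one" "c \<squnion> b = one"
  have "(a \<odot> c) \<squnion> (a \<odot> b) = a" using mult_sup_distrib[of a c b] h by simp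
  moreover have "a \<odot> b \<preceq> (a \<odot> c) \<squnion> b" by (metis le_trans mult_le_left mult_commute sup_ge2)
  ultimately have "a \<preceq> (a \<odot> c) \<squnion> b" by (metis sup_least sup_ge1)
  hence "one \<preceq> (a \<odot> c) \<squnion> b" using h(1) sup_least sup_ge2 by metis
  thus ?thesis by (metis le_antisym le_one)
qed

lemma mult_add_absorb: "(a \<odot> b) \<odot> (a \<oplus> b) = a \<odot> b"
proof -
  have add_mult_absorb: "u \<oplus> v \<oplus> (u \<odot> v) = u \<oplus> v" for u v
  proof -
    have "neg (neg (u \<oplus> v) \<oplus> u) \<oplus> u = neg (neg u \<oplus> (u \<oplus> v)) \<oplus> (u \<oplus> v)"
      by (rule luk_axiom)
    hence s1: "u \<oplus> (neg u \<odot> (u \<oplus> v)) = u \<oplus> v" by (simp add: mult_eq add_assoc add_commute)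
    have "neg v \<oplus> (u \<odot> v) = u \<oplus> (neg u \<odot> neg v)"
      using luk_axiom[of u "neg v"] by (simp add: mult_eq add_commute)
    hence e: "neg u \<odot> (u \<oplus> v) = v \<odot> neg (u \<odot> v)" by (simp add: mult_eq add_commute)
    have "(u \<odot> v) \<odot> neg v = zero" using mult_le_left[of v u] le_iff_mult_neg_zero mult_commute by metis
    hence s2: "(neg u \<odot> (u \<oplus> v)) \<oplus> (u \<odot> v) = v" unfolding e by (metis sup_def sup_commute zero_add)
    show ?thesis by (metis s1 s2 add_assoc)
  qed
  have "neg ((a \<odot> b) \<odot> (a \<oplus> b)) = neg a \<oplus> neg b \<oplus> (neg a \<odot> neg b)" by (simp add: mult_eq)
  also have "\<dots> = neg (a \<odot> b)" using add_mult_absorb[of "neg a" "neg b"] by (simp add: mult_eq)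
  finally show ?thesis by (metis neg_neg)
qed

lemma prelinearity: "(neg x \<oplus> y) \<squnion> (neg y \<oplus> x) = one"
proof -
  let ?a = "x \<odot> neg y" and ?b = "y \<odot> neg x"
  have "?b \<odot> neg ?a = ?b" using mult_add_absorb[of y "neg x"] by (simp add: mult_eq add_commute)
  hence "?b \<odot> (neg ?b \<oplus> ?a) = zero" by (metis mult_eq neg_add_self neg_neg)
  moreover have "(neg x \<oplus> y) \<squnion> (neg y \<oplus> x) = neg (?b \<odot> (neg ?b \<oplus> ?a))"
    by (simp add: sup_def mult_eq add_commute)
  ultimately show ?thesis by simp
qed

lemma mv_filter_iff: "mv_filter oplus neg zero H \<longleftrightarrow>
    one \<in> H \<and> (\<forall>x\<in>H. \<forall>y\<in>H. x \<odot> y \<in> H) \<and> (\<forall>x\<in>H. \<forall>y. x \<preceq> y \<longrightarrow> y \<in> H)"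
  by (simp add: mv_filter_def mv_one_def)

primrec power :: "'a \<Rightarrow> nat \<Rightarrow> 'a" where
  "power x 0 = one" | "power x (Suc n) = x \<odot> power x n"

lemma power_add: "power x (n + m) = power x n \<odot> power x m"
  by (induction n) (auto simp: mult_assoc)

lemma power_sup_one: "a \<squnion> b = one \<Longrightarrow> power a n \<squnion> power b m = one"
proof -
  have step: "a \<squnion> b = one \<Longrightarrow> power a n \<squnion> b = one" for a b n
  proof (induction n)
    case (Suc n) then show ?case using sup_one_mult[of a b "power a n"] by simp
  qed (simp add: sup_def)
  assume "a \<squnion> b = one"
  thus ?thesis by (metis step sup_commute)
qed

end

locale mv_maximal = mv +
  fixes F :: "'a set"
  assumes maximal: "max_filter oplus neg zero F"
begin

lemma filter_F: "one \<in> F" "x \<in> F \<Longrightarrow> y \<in> F \<Longrightarrow> x \<odot> y \<in> F" "x \<in> F \<Longrightarrow> x \<preceq> y \<Longrightarrow> y \<in> F"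
  using maximal unfolding max_filter_def mv_filter_iff by auto

lemma zero_notin_F: "zero \<notin> F"
proof
  assume "zero \<in> F"
  hence "F = UNIV" using filter_F(3) zero_le by blast
  thus False using maximal by (simp add: max_filter_def)
qed

text \<open>Archimedean property: if z \<notin> F then some power of z is "false" modulo F.
  The filter generated by F and z contains zero by maximality.\<close>
lemma archimedean: assumes "z \<notin> F" shows "\<exists>n. neg (power z n) \<in> F"
proof -
  define H where "H = {y. \<exists>f\<in>F. \<exists>n. f \<odot> power z n \<preceq> y}"
  have "mv_filter oplus neg zero H" unfolding mv_filter_iff
  proof (intro conjI ballI allI impI)
    have "one \<odot> power z 0 \<preceq> one" by simp
    thus "one \<in> H" unfolding H_def using filter_F(1) by blast
  next
    fix x y assume "x \<in> H" "y \<in> H"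
    then obtain f n g m where fg: "f \<in> F" "f \<odot> power z n \<preceq> x" "g \<in> F" "g \<odot> power z m \<preceq> y"
      unfolding H_def by blast
    have e: "(f \<odot> g) \<odot> power z (n + m) = (f \<odot> power z n) \<odot> (g \<odot> power z m)"
      unfolding power_add by (simp add: mult_ac)
    have "(f \<odot> power z n) \<odot> (g \<odot> power z m) \<preceq> x \<odot> y" using fg(2,4) by (rule mult_mono)
    hence "(f \<odot> g) \<odot> power z (n + m) \<preceq> x \<odot> y" by (simp only: e)
    moreover have "f \<odot> g \<in> F" using fg filter_F(2) by blast
    ultimately show "x \<odot> y \<in> H" unfolding H_def by blast
  next
    fix x y assume "x \<in> H" "x \<preceq> y"
    then obtain f n where "f \<in> F" "f \<odot> power z n \<preceq> x" unfolding H_def by blast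
    moreover from this(2) \<open>x \<preceq> y\<close> have "f \<odot> power z n \<preceq> y" by (rule le_trans)
    ultimately show "y \<in> H" unfolding H_def by blast
  qed
  moreover have "F \<subseteq> H"
  proof
    fix f assume "f \<in> F"
    moreover have "f \<odot> power z 0 \<preceq> f" by simp
    ultimately show "f \<in> H" unfolding H_def by blast
  qed
  moreover have "z \<in> H"
  proof -
    have "one \<odot> power z 1 \<preceq> z" by simp
    thus ?thesis unfolding H_def using filter_F(1) by blast
  qed
  ultimately have "zero \<in> H"
    using maximal assms unfolding max_filter_def by (metis UNIV_I)
  then obtain f n where "f \<in> F" "f \<odot> power z n \<preceq> zero" unfolding H_def by blast
  hence "f \<preceq> neg (power z n)" by (simp add: residuation)
  thus ?thesis using \<open>f \<in> F\<close> filter_F(3) by blast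
qed

text \<open>The preorder "x \<le> y modulo F", i.e. x/F \<le> y/F in the quotient A/F.\<close>
definition le_mod :: "'a \<Rightarrow> 'a \<Rightarrow> bool" (infix "\<sqsubseteq>" 50) where
  "x \<sqsubseteq> y \<longleftrightarrow> neg x \<oplus> y \<in> F"

lemma le_imp_le_mod: "x \<preceq> y \<Longrightarrow> x \<sqsubseteq> y"
  by (simp add: le_mod_def le_iff filter_F(1))

lemma le_mod_refl: "x \<sqsubseteq> x"
  by (simp add: le_imp_le_mod)

lemma le_mod_trans: "x \<sqsubseteq> y \<Longrightarrow> y \<sqsubseteq> z \<Longrightarrow> x \<sqsubseteq> z"
proof -
  assume "x \<sqsubseteq> y" "y \<sqsubseteq> z"
  hence "(neg x \<oplus> y) \<odot> (neg y \<oplus> z) \<in> F" by (simp add: le_mod_def filter_F(2))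
  moreover have "(neg x \<oplus> y) \<odot> (neg y \<oplus> z) \<preceq> neg x \<oplus> z"
  proof -
    have "x \<odot> (neg x \<oplus> y) \<odot> (neg y \<oplus> z) \<preceq> y \<odot> (neg y \<oplus> z)"
      by (rule mult_right_mono, rule modus_ponens)
    also have "\<dots> \<preceq> z" by (rule modus_ponens)
    finally have "(neg x \<oplus> y) \<odot> (neg y \<oplus> z) \<odot> x \<preceq> z" by (simp add: mult_ac)
    thus ?thesis by (simp add: residuation)
  qed
  ultimately show "x \<sqsubseteq> z" by (simp add: le_mod_def filter_F(3))
qed

lemma le_mod_neg: "x \<sqsubseteq> y \<Longrightarrow> neg y \<sqsubseteq> neg x"
  by (simp add: le_mod_def add_commute)

lemma le_mod_add_right: "x \<sqsubseteq> y \<Longrightarrow> x \<oplus> z \<sqsubseteq> y \<oplus> z"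
proof -
  assume h: "x \<sqsubseteq> y"
  have "x \<preceq> neg (neg x \<oplus> y) \<oplus> y" using le_add_left[of x "neg (neg y \<oplus> x)"] by (simp only: luk_axiom)
  hence "x \<oplus> z \<preceq> neg (neg x \<oplus> y) \<oplus> (y \<oplus> z)" by (metis add_right_mono add_assoc)
  hence "neg x \<oplus> y \<preceq> neg (x \<oplus> z) \<oplus> (y \<oplus> z)" by (metis residuation mult_commute)
  thus ?thesis using h by (simp add: le_mod_def filter_F(3))
qed

lemma le_mod_add: "x \<sqsubseteq> y \<Longrightarrow> u \<sqsubseteq> v \<Longrightarrow> x \<oplus> u \<sqsubseteq> y \<oplus> v"
  by (metis le_mod_add_right add_commute le_mod_trans)

lemma le_mod_mult: "x \<sqsubseteq> y \<Longrightarrow> u \<sqsubseteq> v \<Longrightarrow> x \<odot> u \<sqsubseteq> y \<odot> v"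
  unfolding mult_eq by (intro le_mod_neg le_mod_add)

lemma le_mod_power: "x \<sqsubseteq> y \<Longrightarrow> power x n \<sqsubseteq> power y n"
  by (induction n) (auto intro: le_mod_mult le_mod_refl)

text \<open>A maximal filter is prime: A/F is linearly ordered.  Otherwise both
  implications between x and y are outside F; by the Archimedean property some
  powers of them are false modulo F, contradicting prelinearity.\<close>
lemma le_mod_total: "x \<sqsubseteq> y \<or> y \<sqsubseteq> x"
proof (rule ccontr)
  assume "\<not> ?thesis"
  then obtain n m where nm: "neg (power (neg x \<oplus> y) n) \<in> F" "neg (power (neg y \<oplus> x) m) \<in> F"
    using archimedean unfolding le_mod_def by blast
  have "one \<preceq> power (neg x \<oplus> y) n \<oplus> power (neg y \<oplus> x) m"
    by (metis power_sup_one prelinearity sup_le_add)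
  hence "neg (power (neg x \<oplus> y) n) \<odot> neg (power (neg y \<oplus> x) m) \<preceq> zero"
    by (metis neg_antimono neg_add neg_neg)
  hence "zero \<in> F" using nm filter_F by blast
  thus False using zero_notin_F by simp
qed

end

lemma rat01_iff: "r \<in> rat01 \<longleftrightarrow> 0 \<le> r \<and> r \<le> 1"
  by (simp add: rat01_def)

lemma rat01_between:
  fixes a b :: real
  assumes "0 \<le> a" "a < b" "b \<le> 1"
  obtains q where "q \<in> rat01" "a < of_rat q" "of_rat q < b"
proof -
  obtain q where q: "a < of_rat q" "of_rat q < b" using of_rat_dense[OF assms(2)] by blast
  hence "0 \<le> q" "q \<le> 1" using assms by (smt (verit) zero_le_of_rat_iff of_rat_le_1_iff)+
  thus ?thesis using q that by (simp add: rat01_iff)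
qed

lemma of_rat_min: "real_of_rat (min a b) = min (of_rat a) (of_rat b)"
  by (simp add: min_def of_rat_less_eq)

lemma rat_nonneg_as_nat_fraction:
  assumes "(r::rat) \<ge> 0"
  obtains p q :: nat where "q > 0" "r = of_nat p / of_nat q"
proof -
  obtain a b where ab: "quotient_of r = (a, b)" by (cases "quotient_of r") auto
  have b: "b > 0" and r: "r = of_int a / of_int b"
    using quotient_of_denom_pos[OF ab] quotient_of_div[OF ab] by auto
  hence "a \<ge> 0" using assms by (simp add: zero_le_divide_iff)
  hence "r = of_nat (nat a) / of_nat (nat b)" "nat b > 0" using r b by simp_all
  thus ?thesis using that by blast
qed

lemma le_by_rationals:
  fixes s a b :: real
  assumes "0 \<le> b" "a \<le> 1" "s \<le> 1"
    and rational: "\<And>q. q \<in> rat01 \<Longrightarrow> of_rat q \<le> s \<Longrightarrow> of_rat q + a - 1 \<le> b"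
  shows "s + a - 1 \<le> b"
proof (rule ccontr)
  assume "\<not> ?thesis"
  then obtain q where q: "q \<in> rat01" "b - a + 1 < of_rat q" "of_rat q < s"
    using rat01_between[of "b - a + 1" s] assms(1-3) by auto
  thus False using rational[of q] by argo
qed

locale pavelka = mv +
  fixes c :: "rat \<Rightarrow> 'a"
  assumes pavelka: "pavelka_algebra oplus neg c" and c_zero: "c 0 = zero"
begin

lemma c_add: "r \<in> rat01 \<Longrightarrow> s \<in> rat01 \<Longrightarrow> c r \<oplus> c s = c (min (r + s) 1)"
  using pavelka by (simp add: pavelka_algebra_def)
lemma c_neg: "r \<in> rat01 \<Longrightarrow> neg (c r) = c (1 - r)"
  using pavelka by (simp add: pavelka_algebra_def)
lemma c_one: "c 1 = one"
  using c_neg[of 0] by (simp add: rat01_iff c_zero)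

lemma c_mult: assumes "r \<in> rat01" "s \<in> rat01" shows "c r \<odot> c s = c (max (r + s - 1) 0)"
proof -
  have "c r \<odot> c s = neg (c (1 - r) \<oplus> c (1 - s))" using assms by (simp add: mult_eq c_neg)
  also have "\<dots> = neg (c (min (2 - r - s) 1))" using assms by (simp add: c_add rat01_iff algebra_simps)
  also have "\<dots> = c (1 - min (2 - r - s) 1)" using assms by (simp add: c_neg rat01_iff)
  also have "1 - min (2 - r - s) 1 = max (r + s - 1) 0" by (simp add: min_def max_def)
  finally show ?thesis .
qed

lemma c_mono: assumes "r \<in> rat01" "s \<in> rat01" "r \<le> s" shows "c r \<preceq> c s"
proof -
  have "neg (c r) \<oplus> c s = c (min (1 - r + s) 1)" using assms by (simp add: c_neg c_add rat01_iff)
  also have "min (1 - r + s) 1 = 1" using assms by simp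
  finally show ?thesis by (simp add: le_iff c_one)
qed

lemma c_power: assumes "t \<in> rat01" shows "power (c t) n = c (max (1 - of_nat n * (1 - t)) 0)"
proof (induction n)
  case 0 then show ?case by (simp add: c_one)
next
  case (Suc n)
  have "power (c t) (Suc n) = c t \<odot> c (max (1 - of_nat n * (1 - t)) 0)" using Suc by simp
  also have "\<dots> = c (max (t + max (1 - of_nat n * (1 - t)) 0 - 1) 0)"
    using assms by (intro c_mult) (auto simp: rat01_iff max_def)
  also have "max (t + max (1 - of_nat n * (1 - t)) 0 - 1) 0 = max (1 - of_nat (Suc n) * (1 - t)) 0"
    using assms by (auto simp: rat01_iff max_def algebra_simps)
  finally show ?case .
qed


text \<open>Writing
  r = p/q, the value a = g(c(1/q)) satisfies g(c(k/q)) = min (k a) 1, and the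
  equations g(c 1) = 1 and g(c(1 - 1/q)) = 1 - a force a = 1/q.\<close>
lemma hom_c: assumes g: "mv_hom01 oplus neg zero g" and r: "r \<in> rat01"
  shows "g (c r) = of_rat r"
proof -
  have g_add: "g (x \<oplus> y) = min (g x + g y) 1" and g_neg: "g (neg x) = 1 - g x"
    and g_zero: "g zero = 0" and g_bounds: "0 \<le> g x" "g x \<le> 1" for x y
    using g by (simp_all add: mv_hom01_def)
  obtain p q :: nat where pq: "q > 0" "r = of_nat p / of_nat q"
    using r by (auto simp: rat01_iff elim: rat_nonneg_as_nat_fraction)
  define a where "a = g (c (1 / of_nat q))"
  have unit: "1 / of_nat q \<in> rat01" using pq by (simp add: rat01_iff)
  have multiples: "g (c (of_nat k / of_nat q)) = min (of_nat k * a) 1" if "k \<le> q" for k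
    using that
  proof (induction k)
    case 0 thus ?case by (simp add: c_zero g_zero)
  next
    case (Suc k)
    have "of_nat k / of_nat q \<in> rat01" using Suc pq by (simp add: rat01_iff)
    hence "c (of_nat k / of_nat q) \<oplus> c (1 / of_nat q) = c (of_nat (Suc k) / of_nat q)"
      using c_add[OF _ unit] Suc pq by (simp add: field_simps)
    hence "g (c (of_nat (Suc k) / of_nat q)) = min (min (of_nat k * a) 1 + a) 1"
      using Suc by (metis g_add a_def Suc_leD)
    thus ?case using g_bounds[of "c (1 / of_nat q)"] by (simp add: a_def min_def algebra_simps)
  qed
  have full: "min (of_nat q * a) 1 = 1"
    using multiples[of q] pq c_one g_neg g_zero by simp
  have "a = 1 / of_nat q"
  proof (cases "q = 1")
    case True thus ?thesis using full g_bounds[of "c (1 / of_nat q)"] by (simp add: a_def min_def split: if_splits)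
  next
    case False
    hence "q \<ge> 2" using pq by simp
    hence complement: "neg (c (1 / of_nat q)) = c (of_nat (q - 1) / of_nat q)"
      using c_neg[OF unit] by (simp add: field_simps of_nat_diff)
    have "1 - a = g (neg (c (1 / of_nat q)))" by (simp add: a_def g_neg)
    also have "\<dots> = min (of_nat (q - 1) * a) 1" unfolding complement using multiples by simp
    finally have "1 - a = min ((of_nat q - 1) * a) 1" using \<open>q \<ge> 2\<close> by (simp add: of_nat_diff)
    thus ?thesis using full pq g_bounds[of "c (1 / of_nat q)"]
      by (auto simp: a_def min_def field_simps split: if_splits)
  qed
  have "p \<le> q" using r pq by (simp add: rat01_iff divide_le_eq_1)
  hence "g (c r) = min (of_nat p / of_nat q) 1"
    using multiples[of p] pq \<open>a = 1 / of_nat q\<close> by simp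
  also have "\<dots> = of_rat r" using pq \<open>p \<le> q\<close> by (simp add: of_rat_divide divide_le_eq_1)
  finally show ?thesis .
qed

end

locale pavelka_maximal = pavelka + mv_maximal
begin

text \<open>Distinct constants stay distinct modulo F: a power of the implication
  c s \<rightarrow> c r (for r < s) eventually reaches zero.\<close>
lemma c_strict: assumes "r \<in> rat01" "s \<in> rat01" "r < s" shows "\<not> c s \<sqsubseteq> c r"
proof
  assume "c s \<sqsubseteq> c r"
  hence "c (1 - s + r) \<in> F" using assms by (simp add: le_mod_def c_neg c_add rat01_iff)
  hence in_F: "power (c (1 - s + r)) n \<in> F" for n
    by (induction n) (auto simp: filter_F)
  obtain n :: nat where "1 / (s - r) < of_nat n" using reals_Archimedean2 by blast
  hence "1 < of_nat n * (s - r)" using assms by (simp add: field_simps)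
  hence "power (c (1 - s + r)) n = zero"
    using c_power[of "1 - s + r" n] assms by (simp add: rat01_iff c_zero)
  thus False using in_F[of n] zero_notin_F by simp
qed

lemma c_le_mod_iff: "r \<in> rat01 \<Longrightarrow> s \<in> rat01 \<Longrightarrow> c r \<sqsubseteq> c s \<longleftrightarrow> r \<le> s"
  using c_strict c_mono le_imp_le_mod by (meson not_le)

text \<open>The value of x modulo F: the supremum of the rational constants below x
  modulo F.  It will turn out to be the embedding of A/F into [0,1].\<close>
definition val :: "'a \<Rightarrow> real" where
  "val x = Sup {real_of_rat r | r. r \<in> rat01 \<and> c r \<sqsubseteq> x}"

lemma val_ge: assumes "r \<in> rat01" "c r \<sqsubseteq> x" shows "of_rat r \<le> val x"
  unfolding val_def
  by (rule cSup_upper) (use assms in \<open>auto intro!: bdd_aboveI[of _ 1] simp: rat01_iff\<close>)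

lemma val_le: assumes "s \<in> rat01" "x \<sqsubseteq> c s" shows "val x \<le> of_rat s"
  unfolding val_def
proof (rule cSup_least)
  have "c 0 \<sqsubseteq> x" by (simp add: le_imp_le_mod c_zero)
  thus "{real_of_rat r | r. r \<in> rat01 \<and> c r \<sqsubseteq> x} \<noteq> {}" by (auto simp: rat01_iff intro!: exI[of _ 0])
next
  fix v assume "v \<in> {real_of_rat r | r. r \<in> rat01 \<and> c r \<sqsubseteq> x}"
  then obtain r where r: "v = of_rat r" "r \<in> rat01" "c r \<sqsubseteq> x" by blast
  hence "r \<le> s" using assms c_le_mod_iff le_mod_trans by blast
  thus "v \<le> of_rat s" using r by (simp add: of_rat_less_eq)
qed

lemma val_bounds: "0 \<le> val x" "val x \<le> 1"
  using val_ge[of 0 x] val_le[of 1 x]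
  by (simp_all add: rat01_iff le_imp_le_mod c_zero c_one)

text \<open>Because A/F is linearly ordered, every rational constant is comparable
  with x modulo F; strict inequalities with the val decide the comparison.\<close>
lemma le_mod_if_below_val: assumes "r \<in> rat01" "of_rat r < val x" shows "c r \<sqsubseteq> x"
  using le_mod_total val_le assms by (meson not_le)

lemma le_mod_if_above_val: assumes "s \<in> rat01" "val x < of_rat s" shows "x \<sqsubseteq> c s"
  using le_mod_total val_ge assms by (meson not_le)

lemma val_c: "r \<in> rat01 \<Longrightarrow> val (c r) = of_rat r"
  using val_ge[of r "c r"] val_le[of r "c r"] le_mod_refl by simp

lemma approx_below: assumes "e > 0" shows "\<exists>r\<in>rat01. c r \<sqsubseteq> x \<and> val x - e < of_rat r"
proof (cases "val x - e < 0")
  case True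
  thus ?thesis by (auto simp: rat01_iff le_imp_le_mod c_zero intro!: bexI[of _ 0])
next
  case False
  obtain q where "q \<in> rat01" "val x - e < of_rat q" "of_rat q < val x"
    using rat01_between[of "val x - e" "val x"] False assms val_bounds by auto
  thus ?thesis using le_mod_if_below_val by blast
qed

lemma approx_above: assumes "e > 0" shows "\<exists>s\<in>rat01. x \<sqsubseteq> c s \<and> of_rat s < val x + e"
proof (cases "val x + e > 1")
  case True
  thus ?thesis by (auto simp: rat01_iff le_imp_le_mod c_one intro!: bexI[of _ 1])
next
  case False
  obtain q where "q \<in> rat01" "val x < of_rat q" "of_rat q < val x + e"
    using rat01_between[of "val x" "val x + e"] False assms val_bounds by auto
  thus ?thesis using le_mod_if_above_val by blast
qed

text \<open>val is a homomorphism into the standard MV-algebra: each equation is proved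
  by approximating both sides with constants.\<close>
lemma val_add: "val (x \<oplus> y) = min (val x + val y) 1"
proof (rule antisym)
  show "val (x \<oplus> y) \<le> min (val x + val y) 1"
  proof (rule ccontr)
    assume "\<not> ?thesis"
    hence gap: "val x + val y < val (x \<oplus> y)" using val_bounds[of "x \<oplus> y"] by linarith
    define e where "e = (val (x \<oplus> y) - (val x + val y)) / 2"
    have "e > 0" using gap by (simp add: e_def)
    then obtain r s where r: "r \<in> rat01" "x \<sqsubseteq> c r" "of_rat r < val x + e"
      and s: "s \<in> rat01" "y \<sqsubseteq> c s" "of_rat s < val y + e"
      using approx_above by blast
    have "x \<oplus> y \<sqsubseteq> c (min (r + s) 1)" using le_mod_add[OF r(2) s(2)] r s c_add by simp
    hence "val (x \<oplus> y) \<le> of_rat (min (r + s) 1)" using r s by (intro val_le) (auto simp: rat01_iff)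
    also have "\<dots> \<le> of_rat r + of_rat s" by (simp add: of_rat_min of_rat_add)
    finally show False using r(3) s(3) e_def by argo
  qed
  show "min (val x + val y) 1 \<le> val (x \<oplus> y)"
  proof (rule ccontr)
    assume gap: "\<not> ?thesis"
    define e where "e = (val x + val y - val (x \<oplus> y)) / 2"
    have "e > 0" using gap by (simp add: e_def)
    then obtain r s where r: "r \<in> rat01" "c r \<sqsubseteq> x" "val x - e < of_rat r"
      and s: "s \<in> rat01" "c s \<sqsubseteq> y" "val y - e < of_rat s"
      using approx_below by blast
    have "c (min (r + s) 1) \<sqsubseteq> x \<oplus> y" using le_mod_add[OF r(2) s(2)] r s c_add by simp
    hence "of_rat (min (r + s) 1) \<le> val (x \<oplus> y)" using r s by (intro val_ge) (auto simp: rat01_iff)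
    hence "min (of_rat r + of_rat s) 1 \<le> val (x \<oplus> y)" by (simp add: of_rat_min of_rat_add)
    thus False using r(3) s(3) e_def gap by argo
  qed
qed

lemma val_neg: "val (neg x) = 1 - val x"
proof (rule antisym)
  show "val (neg x) \<le> 1 - val x"
  proof (rule ccontr)
    assume gap: "\<not> ?thesis"
    define e where "e = (val (neg x) - (1 - val x)) / 2"
    have "e > 0" using gap by (simp add: e_def)
    then obtain r where r: "r \<in> rat01" "c r \<sqsubseteq> x" "val x - e < of_rat r" using approx_below by blast
    have "neg x \<sqsubseteq> c (1 - r)" using le_mod_neg[OF r(2)] r(1) by (simp add: c_neg)
    hence "val (neg x) \<le> of_rat (1 - r)" using r(1) by (intro val_le) (auto simp: rat01_iff)
    hence "val (neg x) \<le> 1 - of_rat r" by (simp add: of_rat_diff)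
    thus False using r(3) e_def gap by argo
  qed
  show "1 - val x \<le> val (neg x)"
  proof (rule ccontr)
    assume gap: "\<not> ?thesis"
    define e where "e = ((1 - val x) - val (neg x)) / 2"
    have "e > 0" using gap by (simp add: e_def)
    then obtain r where r: "r \<in> rat01" "x \<sqsubseteq> c r" "of_rat r < val x + e" using approx_above by blast
    have "c (1 - r) \<sqsubseteq> neg x" using le_mod_neg[OF r(2)] r(1) by (simp add: c_neg)
    hence "of_rat (1 - r) \<le> val (neg x)" using r(1) by (intro val_ge) (auto simp: rat01_iff)
    hence "1 - of_rat r \<le> val (neg x)" by (simp add: of_rat_diff)
    thus False using r(3) e_def gap by argo
  qed
qed

text \<open>For y \<notin> F some power y^n is false
  modulo F, while c r \<sqsubseteq> y for every rational r < 1 would make the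
  nonzero constant (c r)^n false modulo F as well.\<close>
lemma val_eq_1_iff: "val y = 1 \<longleftrightarrow> y \<in> F"
proof
  assume "y \<in> F"
  hence "c 1 \<sqsubseteq> y" by (simp add: le_mod_def c_one)
  hence "1 \<le> val y" using val_ge[of 1 y] by (simp add: rat01_iff)
  thus "val y = 1" using val_bounds by (simp add: antisym)
next
  assume val_y: "val y = 1"
  show "y \<in> F"
  proof (rule ccontr)
    assume "y \<notin> F"
    then obtain n where n: "neg (power y n) \<in> F" using archimedean by blast
    define r :: rat where "r = 1 - 1 / (of_nat n + 1)"
    have r: "r \<in> rat01" "of_rat r < (1::real)" by (simp_all add: r_def rat01_iff field_simps)
    hence "c r \<sqsubseteq> y" using le_mod_if_below_val val_y by simp
    hence "power (c r) n \<sqsubseteq> power y n" by (rule le_mod_power)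
    moreover have "power y n \<sqsubseteq> c 0" using n by (simp add: le_mod_def c_zero)
    ultimately have "power (c r) n \<sqsubseteq> c 0" by (rule le_mod_trans)
    moreover have "power (c r) n = c (max (1 - of_nat n * (1 - r)) 0)" using c_power r(1) by blast
    moreover have "max (1 - of_nat n * (1 - r)) 0 \<in> rat01" "0 < max (1 - of_nat n * (1 - r)) 0"
      using r by (auto simp: rat01_iff r_def field_simps)
    ultimately show False using c_le_mod_iff by (simp add: rat01_iff)
  qed
qed

lemma val_hom: "mv_hom01 oplus neg zero val"
proof -
  have "val zero = 0" using val_c[of 0] by (simp add: c_zero rat01_iff)
  thus ?thesis unfolding mv_hom01_def using val_bounds val_add val_neg by blast
qed

text \<open>Uniqueness: a homomorphism g with kernel F agrees with val, since both
  are squeezed by the same rational constants.\<close>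
lemma hom_eq_val: assumes g: "mv_hom01 oplus neg zero g" and ker: "{y. g y = 1} = F"
  shows "g = val"
proof
  fix x
  have g_imp: "g (neg x \<oplus> y) = min (1 - g x + g y) 1" for x y
    using g by (simp add: mv_hom01_def)
  have g_bounds: "0 \<le> g x" "g x \<le> 1" using g by (simp_all add: mv_hom01_def)
  show "g x = val x"
  proof (rule ccontr)
    assume "g x \<noteq> val x"
    then consider "g x < val x" | "val x < g x" by linarith
    thus False
    proof cases
      case 1
      then obtain q where q: "q \<in> rat01" "g x < of_rat q" "of_rat q < val x"
        using rat01_between g_bounds val_bounds by metis
      hence "neg (c q) \<oplus> x \<in> F" using le_mod_if_below_val le_mod_def by blast
      hence "min (1 - of_rat q + g x) 1 = 1" using ker g_imp hom_c[OF g q(1)] by auto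
      thus False using q by (simp add: min_def split: if_splits)
    next
      case 2
      then obtain q where q: "q \<in> rat01" "val x < of_rat q" "of_rat q < g x"
        using rat01_between g_bounds val_bounds by metis
      hence "neg x \<oplus> c q \<in> F" using le_mod_if_above_val le_mod_def by blast
      hence "min (1 - g x + of_rat q) 1 = 1" using ker g_imp hom_c[OF g q(1)] by auto
      thus False using q by (simp add: min_def split: if_splits)
    qed
  qed
qed

theorem quot_val_eq_val: "quot_val oplus neg zero F = val"
proof -
  have "(THE h. mv_hom01 oplus neg zero h \<and> {y. h y = 1} = F) = val"
  proof (rule the_equality)
    show "mv_hom01 oplus neg zero val \<and> {y. val y = 1} = F" using val_hom val_eq_1_iff by blast
  qed (use hom_eq_val in blast)
  thus ?thesis unfolding quot_val_def[abs_def] by simp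
qed

end

definition luk_and :: "real \<Rightarrow> real \<Rightarrow> real" where
  "luk_and a b = max (a + b - 1) 0"

lemma le_inf01_iff: assumes "\<forall>t\<in>S. 0 \<le> t" shows "z \<le> inf01 S \<longleftrightarrow> z \<le> 1 \<and> (\<forall>t\<in>S. z \<le> t)"
  unfolding inf01_def using assms by (subst le_cInf_iff) (auto intro!: bdd_belowI[of _ 0])

lemma le_luk_imp_iff: "z \<le> luk_imp a b \<longleftrightarrow> z \<le> 1 \<and> z + a - 1 \<le> b"
  by (auto simp: luk_imp_def)

lemma luk_imp_nonneg: "a \<le> 1 \<Longrightarrow> 0 \<le> b \<Longrightarrow> 0 \<le> luk_imp a b"
  by (simp add: luk_imp_def)

lemma le_dI_iff:
  assumes "\<forall>m\<in>M. X m \<le> 1" "\<forall>m\<in>M. 0 \<le> I m g"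
  shows "z \<le> dI M I X g \<longleftrightarrow> z \<le> 1 \<and> (\<forall>m\<in>M. z + X m - 1 \<le> I m g)"
proof -
  have "\<forall>t\<in>(\<lambda>m. luk_imp (X m) (I m g)) ` M. 0 \<le> t" using assms by (auto intro: luk_imp_nonneg)
  thus ?thesis unfolding dI_def by (auto simp: le_inf01_iff le_luk_imp_iff)
qed

lemma le_hI_iff:
  assumes "\<forall>g\<in>G. Y g \<le> 1" "\<forall>g\<in>G. 0 \<le> I m g"
  shows "z \<le> hI G I Y m \<longleftrightarrow> z \<le> 1 \<and> (\<forall>g\<in>G. z + Y g - 1 \<le> I m g)"
proof -
  have "\<forall>t\<in>(\<lambda>g. luk_imp (Y g) (I m g)) ` G. 0 \<le> t" using assms by (auto intro: luk_imp_nonneg)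
  thus ?thesis unfolding hI_def by (auto simp: le_inf01_iff le_luk_imp_iff)
qed

lemma concept_closure_shift:
  fixes M :: "'m set" and G :: "'g set"
  assumes I_nonneg: "\<forall>m\<in>M. \<forall>g\<in>G. 0 \<le> I m g"
    and X_le: "\<forall>m\<in>M. X m \<le> 1" and Y_le: "\<forall>m\<in>M. Y m \<le> 1"
    and r: "r \<le> 1" and shift: "\<forall>m\<in>M. luk_and r (X m) \<le> Y m" and m: "m \<in> M"
  shows "luk_and r (hI G I (dI M I X) m) \<le> hI G I (dI M I Y) m"
proof -
  have dI_Y: "dI M I Y g \<le> 1" "\<forall>m\<in>M. dI M I Y g + Y m - 1 \<le> I m g" if "g \<in> G" for g
    using le_dI_iff[of M Y I g "dI M I Y g"] I_nonneg Y_le that by auto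
  have dI_X_le: "\<forall>g\<in>G. dI M I X g \<le> 1"
    using le_dI_iff[of M X I _ "dI M I X _"] I_nonneg X_le by auto
  have dI_Y_le: "\<forall>g\<in>G. dI M I Y g \<le> 1" using dI_Y by blast
  have dI_shift: "r + dI M I Y g - 1 \<le> dI M I X g" if g: "g \<in> G" for g
  proof -
    have "r + dI M I Y g - 1 + X m - 1 \<le> I m g" if "m \<in> M" for m
      using dI_Y(2)[OF g] shift that unfolding luk_and_def by fastforce
    thus ?thesis using le_dI_iff[of M X I g] I_nonneg X_le dI_Y(1)[OF g] r g by fastforce
  qed
  have hI_dI_X: "\<forall>g\<in>G. hI G I (dI M I X) m + dI M I X g - 1 \<le> I m g"
    using le_hI_iff[of G "dI M I X" I m "hI G I (dI M I X) m"] dI_X_le I_nonneg m by auto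
  show ?thesis
    unfolding le_hI_iff[of G "dI M I Y" I m, OF dI_Y_le bspec[OF I_nonneg m]]
  proof (intro conjI ballI)
    show "luk_and r (hI G I (dI M I X) m) \<le> 1"
      using r le_hI_iff[of G "dI M I X" I m "hI G I (dI M I X) m"] dI_X_le I_nonneg m
      by (auto simp: luk_and_def)
  next
    fix g assume g: "g \<in> G"
    show "luk_and r (hI G I (dI M I X) m) + dI M I Y g - 1 \<le> I m g"
      using bspec[OF hI_dI_X g] dI_shift[OF g] dI_Y(1)[OF g] bspec[OF bspec[OF I_nonneg m] g]
      by (auto simp: luk_and_def max_def)
  qed
qed

locale semisimple_pavelka = pavelka +
  assumes semisimple: "semisimple oplus neg zero"
begin

abbreviation spec :: "'a set set" where "spec \<equiv> SpecM oplus neg zero"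
abbreviation emb :: "'a \<Rightarrow> 'a set \<Rightarrow> real" where "emb \<equiv> nat_emb oplus neg zero"

lemma emb_eq_val:
  assumes "m \<in> spec" shows "pavelka_maximal oplus neg zero c m" "emb x m = pavelka_maximal.val oplus neg c m x"
proof -
  show pm: "pavelka_maximal oplus neg zero c m"
    using assms by unfold_locales (simp add: SpecM_def)
  show "emb x m = pavelka_maximal.val oplus neg c m x"
    using pavelka_maximal.quot_val_eq_val[OF pm] by (simp add: nat_emb_def)
qed

lemma emb_bounds: "m \<in> spec \<Longrightarrow> 0 \<le> emb x m" "m \<in> spec \<Longrightarrow> emb x m \<le> 1"
  using emb_eq_val pavelka_maximal.val_bounds by metis+

lemma emb_add: "m \<in> spec \<Longrightarrow> emb (x \<oplus> y) m = min (emb x m + emb y m) 1"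
  using emb_eq_val pavelka_maximal.val_add by metis

lemma emb_neg: "m \<in> spec \<Longrightarrow> emb (neg x) m = 1 - emb x m"
  using emb_eq_val pavelka_maximal.val_neg by metis

lemma emb_c: "m \<in> spec \<Longrightarrow> r \<in> rat01 \<Longrightarrow> emb (c r) m = of_rat r"
  using emb_eq_val pavelka_maximal.val_c by metis

lemma emb_eq_1_iff: "m \<in> spec \<Longrightarrow> emb x m = 1 \<longleftrightarrow> x \<in> m"
  using emb_eq_val pavelka_maximal.val_eq_1_iff by metis

lemma emb_mult: "m \<in> spec \<Longrightarrow> emb (x \<odot> y) m = luk_and (emb x m) (emb y m)"
  by (simp add: mult_eq emb_neg emb_add luk_and_def min_def max_def)

text \<open>Semisimplicity: the natural embedding reflects the order, because x \<le> y
  holds iff the implication neg x \<oplus> y lies in every maximal filter.\<close>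
lemma le_iff_emb_le: "x \<preceq> y \<longleftrightarrow> (\<forall>m\<in>spec. emb x m \<le> emb y m)"
proof -
  have "x \<preceq> y \<longleftrightarrow> neg x \<oplus> y \<in> \<Inter> spec"
    using semisimple by (simp add: semisimple_def mv_one_def le_iff)
  also have "\<dots> \<longleftrightarrow> (\<forall>m\<in>spec. emb (neg x \<oplus> y) m = 1)" by (simp add: emb_eq_1_iff)
  also have "\<dots> \<longleftrightarrow> (\<forall>m\<in>spec. emb x m \<le> emb y m)" by (auto simp: emb_add emb_neg min_def)
  finally show ?thesis .
qed

text \<open>(ii) \<Longrightarrow> (i): an operator represented by a fuzzy context is compatible
  with the constants; no closure property of Cl is needed.\<close>
lemma compatible_if_represented:
  assumes rep: "represented_by_context oplus neg zero Cl G I"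
  shows "\<forall>r\<in>rat01. \<forall>x. c r \<odot> Cl x \<preceq> Cl (c r \<odot> x)"
proof (intro ballI allI)
  fix r x assume r: "r \<in> rat01"
  have I_nonneg: "\<forall>m\<in>spec. \<forall>g\<in>G. 0 \<le> I m g"
    and closure: "\<And>y m. m \<in> spec \<Longrightarrow> emb (Cl y) m = hI G I (dI spec I (emb y)) m"
    using rep by (simp_all add: represented_by_context_def Let_def)
  show "c r \<odot> Cl x \<preceq> Cl (c r \<odot> x)"
    unfolding le_iff_emb_le
  proof
    fix m assume m: "m \<in> spec"
    have X_le: "\<forall>m\<in>spec. emb x m \<le> 1" and Y_le: "\<forall>m\<in>spec. emb (c r \<odot> x) m \<le> 1"
      by (simp_all add: emb_bounds)
    have shift: "\<forall>m\<in>spec. luk_and (of_rat r) (emb x m) \<le> emb (c r \<odot> x) m"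
      using r by (simp add: emb_mult emb_c)
    have "emb (c r \<odot> Cl x) m = luk_and (of_rat r) (hI G I (dI spec I (emb x)) m)"
      using m r by (simp add: emb_mult emb_c closure)
    also have "\<dots> \<le> hI G I (dI spec I (emb (c r \<odot> x))) m"
      using concept_closure_shift[OF I_nonneg X_le Y_le _ shift m] r by (simp add: rat01_iff)
    also have "\<dots> = emb (Cl (c r \<odot> x)) m" using m by (simp add: closure)
    finally show "emb (c r \<odot> Cl x) m \<le> emb (Cl (c r \<odot> x)) m" .
  qed
qed

context
  fixes Cl :: "'a \<Rightarrow> 'a"
  assumes closure: "closure_op oplus neg zero Cl"
    and compatible: "\<forall>r\<in>rat01. \<forall>x. c r \<odot> Cl x \<preceq> Cl (c r \<odot> x)"
begin

text \<open>The canonical context: objects are the maximal filters, attributes the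
  elements of A, and m is incident with g to the degree (Cl g)/m.\<close>
abbreviation incidence :: "'a set \<Rightarrow> 'a \<Rightarrow> real" where
  "incidence m g \<equiv> emb (Cl g) m"

text \<open>If a rational q is below the degree to which x is contained in Cl g, then
  c q \<odot> x \<le> Cl g, hence c q \<odot> Cl x \<le> Cl g by compatibility and closure.\<close>
lemma rational_below_subsethood:
  assumes q: "q \<in> rat01" "of_rat q \<le> dI spec incidence (emb x) g" and m: "m \<in> spec"
  shows "of_rat q + emb (Cl x) m - 1 \<le> emb (Cl g) m"
proof -
  have "\<forall>m'\<in>spec. of_rat q + emb x m' - 1 \<le> emb (Cl g) m'"
    using q le_dI_iff[of spec "emb x" incidence g] by (simp add: emb_bounds)
  hence "c q \<odot> x \<preceq> Cl g"
    using q(1) by (auto simp: le_iff_emb_le emb_mult emb_c luk_and_def emb_bounds)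
  hence "Cl (c q \<odot> x) \<preceq> Cl g" using closure unfolding closure_op_def by metis
  hence "c q \<odot> Cl x \<preceq> Cl g" using compatible q(1) le_trans by blast
  hence "emb (c q \<odot> Cl x) m \<le> emb (Cl g) m" using m le_iff_emb_le by blast
  thus ?thesis using m q(1) by (simp add: emb_mult emb_c luk_and_def)
qed

lemma emb_closure_eq: assumes m: "m \<in> spec"
  shows "emb (Cl x) m = hI UNIV incidence (dI spec incidence (emb x)) m"
proof (rule antisym)
  have "dI spec incidence (emb x) g \<le> 1" for g
    using le_dI_iff[of spec "emb x" incidence g "dI spec incidence (emb x) g"] by (simp add: emb_bounds)
  hence dI_le: "\<forall>g\<in>UNIV. dI spec incidence (emb x) g \<le> 1" by blast
  have incidence_nonneg: "\<forall>g\<in>UNIV. 0 \<le> incidence m g" using m by (simp add: emb_bounds)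
  show "emb (Cl x) m \<le> hI UNIV incidence (dI spec incidence (emb x)) m"
    unfolding le_hI_iff[of UNIV "dI spec incidence (emb x)" incidence m, OF dI_le incidence_nonneg]
  proof (intro conjI ballI)
    show "emb (Cl x) m \<le> 1" using m by (rule emb_bounds)
    fix g
    show "emb (Cl x) m + dI spec incidence (emb x) g - 1 \<le> emb (Cl g) m"
      using le_by_rationals[of "emb (Cl g) m" "emb (Cl x) m" "dI spec incidence (emb x) g"]
        rational_below_subsethood[OF _ _ m] dI_le m by (simp add: emb_bounds add.commute)
  qed
  have "x \<preceq> Cl x" using closure by (simp add: closure_op_def)
  hence "1 \<le> dI spec incidence (emb x) x"
    using le_dI_iff[of spec "emb x" incidence x 1] by (simp add: emb_bounds le_iff_emb_le)
  moreover have "hI UNIV incidence (dI spec incidence (emb x)) m + dI spec incidence (emb x) x - 1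
      \<le> emb (Cl x) m"
    using le_hI_iff[of UNIV "dI spec incidence (emb x)" incidence m, OF dI_le incidence_nonneg] by blast
  ultimately show "hI UNIV incidence (dI spec incidence (emb x)) m \<le> emb (Cl x) m" by linarith
qed

lemma represented_by_canonical_context:
  "represented_by_context oplus neg zero Cl (UNIV :: 'a set) incidence"
  unfolding represented_by_context_def Let_def
proof (intro conjI ballI allI)
  fix m g assume "m \<in> spec"
  thus "0 \<le> incidence m g" "incidence m g \<le> 1" by (simp_all add: emb_bounds)
next
  fix x m assume "m \<in> spec"
  thus "emb (Cl x) m = hI UNIV incidence (dI spec incidence (emb x)) m" by (rule emb_closure_eq)
qed

end

end

text \<open>Theorem 17: (i) implies (ii) via the canonical context, and a representation
  by a context over an attribute set of any type implies (i).\<close>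
theorem theorem17:
  fixes oplus :: "'a \<Rightarrow> 'a \<Rightarrow> 'a" and neg :: "'a \<Rightarrow> 'a" and c :: "rat \<Rightarrow> 'a"
    and Cl :: "'a \<Rightarrow> 'a"
  assumes "pavelka_algebra oplus neg c"
    and "semisimple oplus neg (c 0)"
    and "closure_op oplus neg (c 0) Cl"
  shows "((\<forall>r\<in>rat01. \<forall>x. mv_le oplus neg (c 0) (mv_mult oplus neg (c r) (Cl x))
                                       (Cl (mv_mult oplus neg (c r) x)))
          \<longleftrightarrow> (\<exists>(G :: 'a set) I. represented_by_context oplus neg (c 0) Cl G I))
       \<and> ((\<exists>(G :: 'g set) I. represented_by_context oplus neg (c 0) Cl G I)
          \<longrightarrow> (\<forall>r\<in>rat01. \<forall>x. mv_le oplus neg (c 0) (mv_mult oplus neg (c r) (Cl x))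
                                       (Cl (mv_mult oplus neg (c r) x))))"
proof -
  interpret semisimple_pavelka oplus neg "c 0" c
    using assms(1,2) by unfold_locales (simp_all add: pavelka_algebra_def)
  let ?compatible = "\<forall>r\<in>rat01. \<forall>x. mv_le oplus neg (c 0) (mv_mult oplus neg (c r) (Cl x))
                                       (Cl (mv_mult oplus neg (c r) x))"
  have "?compatible \<Longrightarrow> \<exists>(G :: 'a set) I. represented_by_context oplus neg (c 0) Cl G I"
    using represented_by_canonical_context[OF assms(3)] by blast
  moreover have "represented_by_context oplus neg (c 0) Cl G I \<Longrightarrow> ?compatible"
    for G :: "'a set" and I
    by (rule compatible_if_represented)
  moreover have "represented_by_context oplus neg (c 0) Cl G I \<Longrightarrow> ?compatible"
    for G :: "'g set" and I
    by (rule compatible_if_represented)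
  ultimately show ?thesis by blast
qed

end
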